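(* Let $(\Omega,\mathscr{F},\mu)$ be a complete probability space, $K\subset L^{0}(\mu)$ absolutely convex, closed in probability and bounded in probability, and $E_K=\mathrm{span}(K)$. Let $\tau$ be an equicontinuous Köthe topology on $E_K$ with the Krein-Šmulian property, induced by $F\subset E'_K$. Then for every $g\in F$ the linear map $E_K\ni f\mapsto\int_\Omega fg\,d\mu$ is $\tau$-continuous.
   Context: $L^{0}(\mu)$ carries the topology of convergence in probability. The polar of $C\subset L^{0}(\mu)$ is $C^{\circ}=\{g\in L^{0}(\mu):\sup_{f\in C}\int_\Omega|fg|\,d\mu\leq1\}$; set $E'_K=\mathrm{span}(K^{\circ})$, paired with $E_K$ via $\langle f,g\rangle=\int_\Omega fg\,d\mu$; for $F\subset E'_K$, $\sigma(E_K,F)$ is the associated weak topology on $E_K$. A set is $K$-bounded if it is contained in $\lambda K$ for some $\lambda>0$. A topology $\tau$ on $E_K$ is an equicontinuous Köthe topology if $K$ is $\tau$-compact and $\tau$ restricted to $K$-bounded sets equals $\sigma(E_K,F)$ for some $F\subset E'_K$ that is solid, separates the points of $E_K$, and contains a strictly positive element; $F$ is then said to induce $\tau$. Such $\tau$ has the Krein-Šmulian property if a convex set $C\subset E_K$ is $\tau$-closed if and only if $C\cap\lambda K$ is $\tau$-closed for each $\lambda>0$. *)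

theory Defs
  imports "HOL-Analysis.Analysis" "HOL-Probability.Probability"
begin

text \<open>Elements of L0(mu) are represented by real-valued M-measurable functions;
  almost-everywhere equality is handled explicitly where relevant.\<close>

definition conv_in_prob :: "'a measure \<Rightarrow> (nat \<Rightarrow> 'a \<Rightarrow> real) \<Rightarrow> ('a \<Rightarrow> real) \<Rightarrow> bool" where
  "conv_in_prob M fs f \<longleftrightarrow>
     (\<forall>e>0. (\<lambda>n. measure M {x \<in> space M. e < \<bar>fs n x - f x\<bar>}) \<longlonglongrightarrow> 0)"

definition closed_in_prob :: "'a measure \<Rightarrow> ('a \<Rightarrow> real) set \<Rightarrow> bool" where
  "closed_in_prob M K \<longleftrightarrow> K \<subseteq> borel_measurable M \<and>
     (\<forall>fs f. (\<forall>n. fs n \<in> K) \<longrightarrow> f \<in> borel_measurable M \<longrightarrow> conv_in_prob M fs f \<longrightarrow> f \<in> K)"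

definition bounded_in_prob :: "'a measure \<Rightarrow> ('a \<Rightarrow> real) set \<Rightarrow> bool" where
  "bounded_in_prob M K \<longleftrightarrow>
     (\<forall>e>0. \<exists>c. \<forall>f\<in>K. measure M {x \<in> space M. c < \<bar>f x\<bar>} < e)"

definition abs_convex :: "('a \<Rightarrow> real) set \<Rightarrow> bool" where
  "abs_convex K \<longleftrightarrow> (\<forall>f\<in>K. \<forall>h\<in>K. \<forall>a b::real. \<bar>a\<bar> + \<bar>b\<bar> \<le> 1 \<longrightarrow> (\<lambda>x. a * f x + b * h x) \<in> K)"

definition convex_fset :: "('a \<Rightarrow> real) set \<Rightarrow> bool" where
  "convex_fset C \<longleftrightarrow> (\<forall>f\<in>C. \<forall>h\<in>C. \<forall>t::real. 0 \<le> t \<and> t \<le> 1 \<longrightarrow> (\<lambda>x. t * f x + (1 - t) * h x) \<in> C)"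

definition lin_span :: "('a \<Rightarrow> real) set \<Rightarrow> ('a \<Rightarrow> real) set" where
  "lin_span S = {(\<lambda>x. \<Sum>i<n. c i * v i x) | (n::nat) (c::nat \<Rightarrow> real) (v::nat \<Rightarrow> 'a \<Rightarrow> real). \<forall>i<n. v i \<in> S}"

definition scaleK :: "real \<Rightarrow> ('a \<Rightarrow> real) set \<Rightarrow> ('a \<Rightarrow> real) set" where
  "scaleK c K = (\<lambda>f x. c * f x) ` K"

definition K_bounded :: "('a \<Rightarrow> real) set \<Rightarrow> ('a \<Rightarrow> real) set \<Rightarrow> bool" where
  "K_bounded K B \<longleftrightarrow> (\<exists>c>0. B \<subseteq> scaleK c K)"

definition polar :: "'a measure \<Rightarrow> ('a \<Rightarrow> real) set \<Rightarrow> ('a \<Rightarrow> real) set" where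
  "polar M C = {g \<in> borel_measurable M. \<forall>f\<in>C. (\<integral>\<^sup>+ x. ennreal \<bar>f x * g x\<bar> \<partial>M) \<le> 1}"

definition dual_K :: "'a measure \<Rightarrow> ('a \<Rightarrow> real) set \<Rightarrow> ('a \<Rightarrow> real) set" where
  "dual_K M K = lin_span (polar M K)"

definition pairing :: "'a measure \<Rightarrow> ('a \<Rightarrow> real) \<Rightarrow> ('a \<Rightarrow> real) \<Rightarrow> real" where
  "pairing M f g = (\<integral> x. f x * g x \<partial>M)"

definition weak_top :: "'a measure \<Rightarrow> ('a \<Rightarrow> real) set \<Rightarrow> ('a \<Rightarrow> real) set \<Rightarrow> ('a \<Rightarrow> real) topology" where
  "weak_top M E F = topology_generated_by
     ({E} \<union> {{f \<in> E. pairing M f g \<in> U} | g U. g \<in> F \<and> open U})"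

definition solid_in :: "'a measure \<Rightarrow> ('a \<Rightarrow> real) set \<Rightarrow> ('a \<Rightarrow> real) set \<Rightarrow> bool" where
  "solid_in M D F \<longleftrightarrow> F \<subseteq> D \<and>
     (\<forall>g\<in>F. \<forall>h\<in>D. (AE x in M. \<bar>h x\<bar> \<le> \<bar>g x\<bar>) \<longrightarrow> h \<in> F)"

definition separates_points :: "'a measure \<Rightarrow> ('a \<Rightarrow> real) set \<Rightarrow> ('a \<Rightarrow> real) set \<Rightarrow> bool" where
  "separates_points M E F \<longleftrightarrow>
     (\<forall>f\<in>E. \<forall>h\<in>E. (\<forall>g\<in>F. pairing M f g = pairing M h g) \<longrightarrow> (AE x in M. f x = h x))"

definition equicont_Koethe_top ::
  "'a measure \<Rightarrow> ('a \<Rightarrow> real) set \<Rightarrow> ('a \<Rightarrow> real) topology \<Rightarrow> ('a \<Rightarrow> real) set \<Rightarrow> bool" where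
  "equicont_Koethe_top M K \<tau> F \<longleftrightarrow>
     topspace \<tau> = lin_span K \<and>
     compactin \<tau> K \<and>
     solid_in M (dual_K M K) F \<and>
     separates_points M (lin_span K) F \<and>
     (\<exists>g\<in>F. AE x in M. 0 < g x) \<and>
     (\<forall>B. K_bounded K B \<longrightarrow> subtopology \<tau> B = subtopology (weak_top M (lin_span K) F) B)"

definition Krein_Smulian :: "('a \<Rightarrow> real) set \<Rightarrow> ('a \<Rightarrow> real) topology \<Rightarrow> bool" where
  "Krein_Smulian K \<tau> \<longleftrightarrow>
     (\<forall>C. C \<subseteq> topspace \<tau> \<longrightarrow> convex_fset C \<longrightarrow>
        (closedin \<tau> C \<longleftrightarrow> (\<forall>c>0. closedin \<tau> (C \<inter> scaleK c K))))"

end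

theory Submission
  imports Defs
begin

text \<open>The functional f \<mapsto> \<integral> f g is linear on E_K (g lies in the span of the polar of K, so
  every product f g is integrable), hence its sub- and superlevel sets are convex. They are
  \<sigma>(E_K, F)-closed because g \<in> F. On each \<lambda>K the topology \<tau> agrees with \<sigma>(E_K, F), and \<lambda>K is
  itself \<tau>-closed (the Krein-Smulian property applied to E_K), so the level sets meet every
  \<lambda>K in a \<tau>-closed set and are therefore \<tau>-closed.\<close>

lemma sum_lessThan_add_nat:
  "(\<Sum>i<n + m. F i) = (\<Sum>i<n. F i) + (\<Sum>i<m. F (i + n))" for F :: "nat \<Rightarrow> 'b::comm_monoid_add"
  by (induction m) (simp_all add: ac_simps)

lemma lin_spanE:
  assumes "f \<in> lin_span S"
  obtains c :: "nat \<Rightarrow> real" and v :: "nat \<Rightarrow> 'a \<Rightarrow> real" and n :: nat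
  where "f = (\<lambda>x. \<Sum>i<n. c i * v i x)" "\<forall>i<n. v i \<in> S"
  using assms unfolding lin_span_def by blast

lemma lin_spanI:
  fixes c :: "nat \<Rightarrow> real" and v :: "nat \<Rightarrow> 'a \<Rightarrow> real"
  assumes "f = (\<lambda>x. \<Sum>i<n. c i * v i x)" "\<forall>i<n. v i \<in> S"
  shows "f \<in> lin_span S"
  using assms unfolding lin_span_def by blast

lemma lin_span_lincomb:
  assumes "f \<in> lin_span S" "h \<in> lin_span S"
  shows "(\<lambda>x. a * f x + b * h x) \<in> lin_span S"
proof -
  obtain c v and n :: nat where f: "f = (\<lambda>x. \<Sum>i<n. c i * v i x)" and v: "\<forall>i<n. v i \<in> S"
    using assms(1) by (rule lin_spanE)
  obtain d w and m :: nat where h: "h = (\<lambda>x. \<Sum>i<m. d i * w i x)" and w: "\<forall>i<m. w i \<in> S"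
    using assms(2) by (rule lin_spanE)
  define c' where "c' i = (if i < n then a * c i else b * d (i - n))" for i
  define v' where "v' i = (if i < n then v i else w (i - n))" for i
  have "a * f x + b * h x = (\<Sum>i<n + m. c' i * v' i x)" for x
  proof -
    have "(\<Sum>i<n. c' i * v' i x) = a * f x"
      by (simp add: f c'_def v'_def sum_distrib_left mult.assoc)
    moreover have "(\<Sum>i<m. c' (i + n) * v' (i + n) x) = b * h x"
      by (simp add: h c'_def v'_def sum_distrib_left mult.assoc)
    ultimately show ?thesis
      by (simp add: sum_lessThan_add_nat)
  qed
  moreover have "\<forall>i<n + m. v' i \<in> S"
    using v w by (auto simp: v'_def)
  ultimately show ?thesis
    by (intro lin_spanI) auto
qed

lemma convex_fset_lin_span: "convex_fset (lin_span S)"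
  unfolding convex_fset_def using lin_span_lincomb by blast

lemma scaleK_subset_lin_span: "scaleK c K \<subseteq> lin_span K"
proof
  fix f assume "f \<in> scaleK c K"
  then obtain k where "k \<in> K" "f = (\<lambda>x. c * k x)"
    unfolding scaleK_def by blast
  then show "f \<in> lin_span K"
    by (intro lin_spanI[where n="Suc 0" and c="\<lambda>_. c" and v="\<lambda>_. k"]) simp_all
qed

lemma integrable_mult_lin_span:
  assumes "\<And>v w. v \<in> S \<Longrightarrow> w \<in> T \<Longrightarrow> integrable M (\<lambda>x. v x * w x)"
    and "f \<in> lin_span S" "g \<in> lin_span T"
  shows "integrable M (\<lambda>x. f x * g x)"
proof -
  obtain c v and n :: nat where f: "f = (\<lambda>x. \<Sum>i<n. c i * v i x)" and v: "\<forall>i<n. v i \<in> S"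
    using assms(2) by (rule lin_spanE)
  obtain d w and m :: nat where g: "g = (\<lambda>x. \<Sum>j<m. d j * w j x)" and w: "\<forall>j<m. w j \<in> T"
    using assms(3) by (rule lin_spanE)
  have vw: "integrable M (\<lambda>x. v i x * w j x)" if "i < n" "j < m" for i j
    using v w assms(1) that by blast
  have "integrable M (\<lambda>x. \<Sum>i<n. \<Sum>j<m. c i * d j * (v i x * w j x))"
    by (intro Bochner_Integration.integrable_sum integrable_mult_right) (simp add: vw)
  moreover have "f x * g x = (\<Sum>i<n. \<Sum>j<m. c i * d j * (v i x * w j x))" for x
    by (simp add: f g sum_product mult_ac)
  ultimately show ?thesis
    by simp
qed

lemma integrable_mult_polar:
  assumes "w \<in> borel_measurable M" "w \<in> C" "v \<in> polar M C"
  shows "integrable M (\<lambda>x. w x * v x)"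
proof (rule integrableI_bounded)
  show "(\<lambda>x. w x * v x) \<in> borel_measurable M"
    using assms(1,3) unfolding polar_def by auto
  have "(\<integral>\<^sup>+ x. ennreal (norm (w x * v x)) \<partial>M) \<le> 1"
    using assms(2,3) unfolding polar_def by auto
  then show "(\<integral>\<^sup>+ x. ennreal (norm (w x * v x)) \<partial>M) < \<infinity>"
    by (simp add: le_less_trans)
qed

lemma integrable_mult_dual_K:
  assumes "K \<subseteq> borel_measurable M" "f \<in> lin_span K" "g \<in> dual_K M K"
  shows "integrable M (\<lambda>x. f x * g x)"
proof (rule integrable_mult_lin_span[where S = K and T = "polar M K"])
  show "g \<in> lin_span (polar M K)"
    using assms(3) unfolding dual_K_def .
qed (use assms(1,2) integrable_mult_polar in blast)+

lemma pairing_lincomb: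
  assumes "integrable M (\<lambda>x. f x * g x)" "integrable M (\<lambda>x. h x * g x)"
  shows "pairing M (\<lambda>x. a * f x + b * h x) g = a * pairing M f g + b * pairing M h g"
proof -
  have "(\<lambda>x. (a * f x + b * h x) * g x) = (\<lambda>x. a * (f x * g x) + b * (h x * g x))"
    by (simp add: algebra_simps)
  then show ?thesis
    using assms unfolding pairing_def by simp
qed

lemma convex_fset_pairing_preimage:
  assumes "K \<subseteq> borel_measurable M" "g \<in> dual_K M K" "convex S"
  shows "convex_fset {f \<in> lin_span K. pairing M f g \<in> S}"
  unfolding convex_fset_def
proof (intro ballI allI impI)
  fix f h and t :: real
  assume f: "f \<in> {f \<in> lin_span K. pairing M f g \<in> S}"
    and h: "h \<in> {f \<in> lin_span K. pairing M f g \<in> S}" and t: "0 \<le> t \<and> t \<le> 1"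
  have "pairing M (\<lambda>x. t * f x + (1 - t) * h x) g = t * pairing M f g + (1 - t) * pairing M h g"
    using f h assms(1,2) by (intro pairing_lincomb) (auto intro: integrable_mult_dual_K)
  also have "\<dots> \<in> S"
    using f h t assms(3) unfolding convex_def by auto
  finally show "(\<lambda>x. t * f x + (1 - t) * h x) \<in> {f \<in> lin_span K. pairing M f g \<in> S}"
    using f h lin_span_lincomb by blast
qed

lemma closedin_weak_top_pairing_preimage:
  assumes "g \<in> F" "closed S"
  shows "closedin (weak_top M E F) {f \<in> E. pairing M f g \<in> S}"
proof -
  have "open (- S)"
    using assms(2) by (simp add: open_Compl)
  then have "openin (weak_top M E F) {f \<in> E. pairing M f g \<in> - S}"
    unfolding weak_top_def using assms(1) by (blast intro: topology_generated_by_Basis)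
  moreover have "topspace (weak_top M E F) = E"
    unfolding weak_top_def by auto
  moreover have "E - {f \<in> E. pairing M f g \<in> S} = {f \<in> E. pairing M f g \<in> - S}"
    by auto
  ultimately show ?thesis
    unfolding closedin_def by (metis (no_types, lifting) mem_Collect_eq subsetI)
qed

lemma closedin_scaleK:
  assumes "topspace \<tau> = lin_span K" "Krein_Smulian K \<tau>" "c > 0"
  shows "closedin \<tau> (scaleK c K)"
proof -
  have "closedin \<tau> (lin_span K \<inter> scaleK c K)"
    using assms convex_fset_lin_span unfolding Krein_Smulian_def
    by (metis closedin_topspace order_refl)
  then show ?thesis
    by (metis scaleK_subset_lin_span inf.absorb_iff2)
qed

lemma closedin_Krein_Smulian_weak_top:
  assumes "topspace \<tau> = lin_span K" "Krein_Smulian K \<tau>"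
    and "\<And>B. K_bounded K B \<Longrightarrow> subtopology \<tau> B = subtopology (weak_top M (lin_span K) F) B"
    and "C \<subseteq> lin_span K" "convex_fset C" "closedin (weak_top M (lin_span K) F) C"
  shows "closedin \<tau> C"
proof -
  have "closedin \<tau> (C \<inter> scaleK c K)" if "c > 0" for c
  proof -
    have "K_bounded K (scaleK c K)"
      unfolding K_bounded_def using that by blast
    then have "closedin (subtopology \<tau> (scaleK c K)) (C \<inter> scaleK c K)"
      using assms(3,6) by (auto simp: closedin_subtopology)
    then show ?thesis
      using closedin_trans_full closedin_scaleK[OF assms(1,2) that] by blast
  qed
  then show ?thesis
    using assms(1,2,4,5) unfolding Krein_Smulian_def by blast
qed

theorem lemma5p1:
  fixes M :: "'a measure" and K F :: "('a \<Rightarrow> real) set" and \<tau> :: "('a \<Rightarrow> real) topology"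
    and g :: "'a \<Rightarrow> real"
  assumes "prob_space M" and "complete_measure M"
    and "K \<subseteq> borel_measurable M"
    and "abs_convex K" and "closed_in_prob M K" and "bounded_in_prob M K"
    and "equicont_Koethe_top M K \<tau> F"
    and "Krein_Smulian K \<tau>"
    and "g \<in> F"
  shows "continuous_map \<tau> euclideanreal (\<lambda>f. pairing M f g)"
proof -
  have top: "topspace \<tau> = lin_span K" and g_dual: "g \<in> dual_K M K"
    and weak: "\<And>B. K_bounded K B \<Longrightarrow> subtopology \<tau> B = subtopology (weak_top M (lin_span K) F) B"
    using assms(7,9) unfolding equicont_Koethe_top_def solid_in_def by blast+
  have closed_preimage: "closedin \<tau> {f \<in> lin_span K. pairing M f g \<in> S}"
    if "closed S" "convex S" for S
  proof (rule closedin_Krein_Smulian_weak_top[OF top assms(8) weak])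
    show "convex_fset {f \<in> lin_span K. pairing M f g \<in> S}"
      using assms(3) g_dual that(2) by (rule convex_fset_pairing_preimage)
    show "closedin (weak_top M (lin_span K) F) {f \<in> lin_span K. pairing M f g \<in> S}"
      using assms(9) that(1) by (rule closedin_weak_top_pairing_preimage)
  qed auto
  show ?thesis
    unfolding continuous_map_upper_lower_semicontinuous_le top
    using closed_preimage[of "{_..}"] closed_preimage[of "{.._}"]
    by simp
qed

end
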